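(* In the standing setup below, for every color $\lambda\in\Lambda$ the cycle $\mathsf D_\lambda$ contains an outer edge.
   Context: Colored graphs: a (colored) graph is a finite set of pairs $(e,\alpha)$ with the $e$'s pairwise distinct 2-element vertex subsets $uv$ and $\alpha$ colors (repeats allowed); $V(\cdot),E(\cdot),\chi(\cdot)$ are vertex set, underlying uncolored edge set, color set; rainbow means $|\chi(\mathsf G)|=|\mathsf G|$, almost rainbow means $|\chi(\mathsf G)|=|\mathsf G|-1$; subgraphs are subsets; $\mathsf G+\mathsf e=\mathsf G\cup\{\mathsf e\}$, $\mathsf G-\mathsf e=\mathsf G\setminus\{\mathsf e\}$. Paths/cycles/trees are colored graphs whose underlying edges form a path (two distinct terminals)/cycle/tree; lengths count edges. A long rainbow odd cycle is a rainbow cycle of odd length $\ge7$. A theta graph is a union of three paths with the same terminals $s\ne t$, pairwise sharing no vertex except $s,t$ and no underlying edge; a bad piece is an almost rainbow theta graph with $\ge6$ vertices that is the union of three rainbow such paths. A partition of a graph $\mathsf G$ is a collection of graphs (parts) with union $\mathsf G$, any two sharing at most one vertex and no color. A Frankenstein graph is a graph with a partition $\{\mathsf C_1,..,\mathsf C_c,\mathsf B_1,..,\mathsf B_b,\mathsf T_1,..,\mathsf T_t\}$ ($c+b+t\ge1$) into long rainbow odd cycles $\mathsf C_i$, bad pieces $\mathsf B_i$ and pairwise vertex-disjoint rainbow trees $\mathsf T_i$, having no rainbow even cycle as a subgraph. For a tree $\mathsf T$ with $V(\mathsf T)\subset\mathbb Z_{>0}$, its root is $\min V(\mathsf T)$ and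 $\mathrm{depth}_{\mathsf T}(v)$ is the length of the path in $\mathsf T$ from the root to $v$; the total depth $\mathrm{Depth}(\mathfrak F)$ of a Frankenstein graph is $\sum_{i=1}^t\sum_{v\in V(\mathsf T_i)}\mathrm{depth}_{\mathsf T_i}(v)$. Standing setup: $n\ge1$, $m=\lfloor 6(n-1)/5\rfloor+1$, and $\mathcal D=(\mathsf D_1,\dots,\mathsf D_m)$ is a family of even cycles on $[n]=\{1,\dots,n\}$, all edges of $\mathsf D_i$ having color $i$, such that no rainbow even cycle is a subgraph of $\bigcup_i\mathsf D_i$ (a subgraph of $\mathcal D$ means a simple graph $\subseteq\bigcup_i\mathsf D_i$). Two edges are coincident if they have the same vertex pair and different colors. $\mathfrak F_*$ is a Frankenstein subgraph of $\mathcal D$ (with partition) chosen to maximize $c$, then $b$, then $|\mathfrak F_*|$, then to minimize $\mathrm{Depth}(\mathfrak F_* )$; its partition is $\{\mathsf C_1,..,\mathsf C_c,\mathsf B_1,..,\mathsf B_b,\mathsf T_1,..,\mathsf T_t\}$. Let $\Lambda=\{1,\dots,m\}\setminus\chi(\mathfrak F_* )$. An outer edge is an edge $\mathsf f$ of $\bigcup_{\lambda\in\Lambda}\mathsf D_\lambda$ such that no edge of $\mathfrak F_*$ is coincident to $\mathsf f$. An outer cycle of an outer edge $\mathsf f$ is a rainbow cycle of length $3$ or $5$ in $\mathfrak F_*+\mathsf f$ containing $\mathsf f$. *)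

theory Defs
  imports Main
begin

type_synonym cedge = "nat set \<times> nat"
type_synonym cgraph = "cedge set"

definition colored_graph :: "cgraph \<Rightarrow> bool" where
  "colored_graph G \<longleftrightarrow> finite G \<and>
     (\<forall>x\<in>G. \<exists>u v. u \<noteq> v \<and> fst x = {u, v}) \<and>
     (\<forall>x\<in>G. \<forall>y\<in>G. fst x = fst y \<longrightarrow> x = y)"

definition Vs :: "cgraph \<Rightarrow> nat set" where
  "Vs G = \<Union> (fst ` G)"

definition Es :: "cgraph \<Rightarrow> nat set set" where
  "Es G = fst ` G"

definition cols :: "cgraph \<Rightarrow> nat set" where
  "cols G = snd ` G"

definition rainbow :: "cgraph \<Rightarrow> bool" where
  "rainbow G \<longleftrightarrow> card (cols G) = card G"

definition almost_rainbow :: "cgraph \<Rightarrow> bool" where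
  "almost_rainbow G \<longleftrightarrow> card (cols G) + 1 = card G"

definition path_edges :: "nat list \<Rightarrow> nat set set" where
  "path_edges vs = {{vs ! i, vs ! Suc i} | i. Suc i < length vs}"

definition upath :: "nat set set \<Rightarrow> nat \<Rightarrow> nat \<Rightarrow> bool" where
  "upath E s t \<longleftrightarrow> (\<exists>vs. distinct vs \<and> 2 \<le> length vs \<and> hd vs = s \<and> last vs = t \<and>
      E = path_edges vs)"

definition ucycle :: "nat set set \<Rightarrow> bool" where
  "ucycle E \<longleftrightarrow> (\<exists>vs. distinct vs \<and> 3 \<le> length vs \<and>
      E = path_edges vs \<union> {{last vs, hd vs}})"

definition uconnected :: "nat set set \<Rightarrow> bool" where
  "uconnected E \<longleftrightarrow> (\<forall>u\<in>\<Union>E. \<forall>v\<in>\<Union>E. u \<noteq> v \<longrightarrow> (\<exists>P\<subseteq>E. upath P u v))"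

definition utree :: "nat set set \<Rightarrow> bool" where
  "utree E \<longleftrightarrow> E \<noteq> {} \<and> uconnected E \<and> \<not> (\<exists>C\<subseteq>E. ucycle C)"

definition cpath :: "cgraph \<Rightarrow> nat \<Rightarrow> nat \<Rightarrow> bool" where
  "cpath P s t \<longleftrightarrow> colored_graph P \<and> upath (Es P) s t"

definition ccycle :: "cgraph \<Rightarrow> bool" where
  "ccycle C \<longleftrightarrow> colored_graph C \<and> ucycle (Es C)"

definition ctree :: "cgraph \<Rightarrow> bool" where
  "ctree T \<longleftrightarrow> colored_graph T \<and> utree (Es T)"

definition long_rainbow_odd_cycle :: "cgraph \<Rightarrow> bool" where
  "long_rainbow_odd_cycle C \<longleftrightarrow> ccycle C \<and> rainbow C \<and> odd (card C) \<and> 7 \<le> card C"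

definition theta_paths :: "cgraph \<Rightarrow> cgraph \<Rightarrow> cgraph \<Rightarrow> nat \<Rightarrow> nat \<Rightarrow> bool" where
  "theta_paths P1 P2 P3 s t \<longleftrightarrow> s \<noteq> t \<and> cpath P1 s t \<and> cpath P2 s t \<and> cpath P3 s t \<and>
     Vs P1 \<inter> Vs P2 \<subseteq> {s, t} \<and> Vs P1 \<inter> Vs P3 \<subseteq> {s, t} \<and> Vs P2 \<inter> Vs P3 \<subseteq> {s, t} \<and>
     Es P1 \<inter> Es P2 = {} \<and> Es P1 \<inter> Es P3 = {} \<and> Es P2 \<inter> Es P3 = {}"

definition theta_graph :: "cgraph \<Rightarrow> bool" where
  "theta_graph G \<longleftrightarrow> colored_graph G \<and>
     (\<exists>P1 P2 P3 s t. theta_paths P1 P2 P3 s t \<and> G = P1 \<union> P2 \<union> P3)"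

definition bad_piece :: "cgraph \<Rightarrow> bool" where
  "bad_piece G \<longleftrightarrow> theta_graph G \<and> almost_rainbow G \<and> 6 \<le> card (Vs G) \<and>
     (\<exists>P1 P2 P3 s t. theta_paths P1 P2 P3 s t \<and> rainbow P1 \<and> rainbow P2 \<and> rainbow P3 \<and>
        G = P1 \<union> P2 \<union> P3)"

definition is_partition :: "cgraph \<Rightarrow> cgraph list \<Rightarrow> bool" where
  "is_partition G ps \<longleftrightarrow> (\<forall>p\<in>set ps. colored_graph p) \<and> \<Union> (set ps) = G \<and>
     (\<forall>i<length ps. \<forall>j<length ps. i \<noteq> j \<longrightarrow>
        card (Vs (ps ! i) \<inter> Vs (ps ! j)) \<le> 1 \<and> cols (ps ! i) \<inter> cols (ps ! j) = {})"

definition frankenstein :: "cgraph \<Rightarrow> cgraph list \<Rightarrow> cgraph list \<Rightarrow> cgraph list \<Rightarrow> bool" where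
  "frankenstein F Cs Bs Ts \<longleftrightarrow> colored_graph F \<and> is_partition F (Cs @ Bs @ Ts) \<and>
     1 \<le> length Cs + length Bs + length Ts \<and>
     (\<forall>C\<in>set Cs. long_rainbow_odd_cycle C) \<and> (\<forall>B\<in>set Bs. bad_piece B) \<and>
     (\<forall>T\<in>set Ts. ctree T \<and> rainbow T) \<and>
     (\<forall>i<length Ts. \<forall>j<length Ts. i \<noteq> j \<longrightarrow> Vs (Ts ! i) \<inter> Vs (Ts ! j) = {}) \<and>
     \<not> (\<exists>H\<subseteq>F. ccycle H \<and> rainbow H \<and> even (card H))"

definition tree_root :: "cgraph \<Rightarrow> nat" where
  "tree_root T = Min (Vs T)"

definition tree_depth :: "cgraph \<Rightarrow> nat \<Rightarrow> nat" where
  "tree_depth T v = (if v = tree_root T then 0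
     else (THE k. \<exists>P\<subseteq>T. cpath P (tree_root T) v \<and> card P = k))"

definition total_depth :: "cgraph list \<Rightarrow> nat" where
  "total_depth Ts = sum_list (map (\<lambda>T. \<Sum>v\<in>Vs T. tree_depth T v) Ts)"

definition union_fam :: "(nat \<Rightarrow> cgraph) \<Rightarrow> nat \<Rightarrow> cgraph" where
  "union_fam D m = (\<Union>i\<in>{1..m}. D i)"

definition standing_setup :: "nat \<Rightarrow> nat \<Rightarrow> (nat \<Rightarrow> cgraph) \<Rightarrow> bool" where
  "standing_setup n m D \<longleftrightarrow> 1 \<le> n \<and> m = (6 * (n - 1)) div 5 + 1 \<and>
     (\<forall>i\<in>{1..m}. ccycle (D i) \<and> even (card (D i)) \<and> Vs (D i) \<subseteq> {1..n} \<and>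
        (\<forall>x\<in>D i. snd x = i)) \<and>
     \<not> (\<exists>H\<subseteq>union_fam D m. ccycle H \<and> rainbow H \<and> even (card H))"

definition frank_sub :: "(nat \<Rightarrow> cgraph) \<Rightarrow> nat \<Rightarrow> cgraph \<Rightarrow> cgraph list \<Rightarrow> cgraph list \<Rightarrow> cgraph list \<Rightarrow> bool" where
  "frank_sub D m F Cs Bs Ts \<longleftrightarrow> frankenstein F Cs Bs Ts \<and> F \<subseteq> union_fam D m"

definition frank_better ::
  "cgraph \<Rightarrow> cgraph list \<Rightarrow> cgraph list \<Rightarrow> cgraph list \<Rightarrow>
   cgraph \<Rightarrow> cgraph list \<Rightarrow> cgraph list \<Rightarrow> cgraph list \<Rightarrow> bool" where
  "frank_better F' Cs' Bs' Ts' F Cs Bs Ts \<longleftrightarrow>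
     length Cs' > length Cs \<or>
     (length Cs' = length Cs \<and> (length Bs' > length Bs \<or>
       (length Bs' = length Bs \<and> (card F' > card F \<or>
          (card F' = card F \<and> total_depth Ts' < total_depth Ts)))))"

definition frank_optimal :: "(nat \<Rightarrow> cgraph) \<Rightarrow> nat \<Rightarrow> cgraph \<Rightarrow> cgraph list \<Rightarrow> cgraph list \<Rightarrow> cgraph list \<Rightarrow> bool" where
  "frank_optimal D m F Cs Bs Ts \<longleftrightarrow> frank_sub D m F Cs Bs Ts \<and>
     (\<forall>F' Cs' Bs' Ts'. frank_sub D m F' Cs' Bs' Ts' \<longrightarrow> \<not> frank_better F' Cs' Bs' Ts' F Cs Bs Ts)"

definition Lambda :: "nat \<Rightarrow> cgraph \<Rightarrow> nat set" where
  "Lambda m F = {1..m} - cols F"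

definition coincident :: "cedge \<Rightarrow> cedge \<Rightarrow> bool" where
  "coincident x y \<longleftrightarrow> fst x = fst y \<and> snd x \<noteq> snd y"

definition outer_edge :: "(nat \<Rightarrow> cgraph) \<Rightarrow> nat \<Rightarrow> cgraph \<Rightarrow> cedge \<Rightarrow> bool" where
  "outer_edge D m F f \<longleftrightarrow> f \<in> (\<Union>l\<in>Lambda m F. D l) \<and> \<not> (\<exists>g\<in>F. coincident g f)"

end

theory Submission
  imports Defs
begin

text \<open>Suppose every pair of \<open>D\<^sub>\<lambda>\<close> carried an edge of the Frankenstein graph \<open>F\<close>.
  These edges form an even cycle of \<open>F\<close>, which cannot be rainbow, so two of them share a
  color. Long odd cycles and trees of the partition are rainbow and distinct parts share no
  color, so both edges lie in one bad piece \<open>B\<close>; removing one of them, \<open>g\<close>, leaves \<open>B\<close>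
  rainbow. A theta graph contains an even cycle \<open>K\<close>. If \<open>g \<notin> K\<close>, \<open>K\<close> is a rainbow even
  cycle; otherwise replacing \<open>g\<close> by the edge of \<open>D\<^sub>\<lambda>\<close> on the same pair, whose color \<open>\<lambda>\<close>
  is new, gives one. Either way the family contains a rainbow even cycle.\<close>

lemma path_edges_conv_image: "path_edges vs = (\<lambda>i. {vs ! i, vs ! Suc i}) ` {..< length vs - 1}"
  unfolding path_edges_def by fastforce

lemma path_edges_singleton [simp]: "path_edges [a] = {}"
  by (simp add: path_edges_conv_image)

lemma path_edges_Cons_Cons [simp]:
  "path_edges (a # b # xs) = insert {a, b} (path_edges (b # xs))"
  by (simp add: path_edges_conv_image lessThan_Suc_eq_insert_0 image_image)

lemma path_edges_append:
  "xs \<noteq> [] \<Longrightarrow> ys \<noteq> [] \<Longrightarrow>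
    path_edges (xs @ ys) = insert {last xs, hd ys} (path_edges xs \<union> path_edges ys)"
proof (induction xs rule: induct_list012)
  case (3 a b zs)
  then show ?case by auto
qed (auto simp: neq_Nil_conv)

lemma path_edges_rev [simp]: "path_edges (rev xs) = path_edges xs"
proof (induction xs)
  case (Cons x xs)
  show ?case
  proof (cases xs)
    case (Cons y ys)
    then have "path_edges (rev xs @ [x]) = insert {last (rev xs), x} (path_edges (rev xs))"
      using path_edges_append[of "rev xs" "[x]"] by simp
    then show ?thesis
      using Cons.IH Cons by (simp add: last_rev insert_commute)
  qed simp
qed simp

lemma Union_path_edges_Cons: "xs \<noteq> [] \<Longrightarrow> \<Union> (path_edges (x # xs)) = set (x # xs)"
proof (induction xs arbitrary: x)
  case (Cons y ys)
  then show ?case by (cases ys) auto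
qed simp

lemma Union_path_edges:
  assumes "2 \<le> length vs"
  shows "\<Union> (path_edges vs) = set vs"
proof -
  obtain x xs where "vs = x # xs" "xs \<noteq> []"
    using assms by (cases vs) (auto simp: Suc_le_eq)
  then show ?thesis using Union_path_edges_Cons by blast
qed

lemma ucycle_path_edges_closed:
  assumes "distinct cs" and "3 \<le> length cs"
  shows "ucycle (path_edges (cs @ [hd cs]))"
proof -
  have "cs \<noteq> []"
    using assms(2) by auto
  then have "path_edges (cs @ [hd cs]) = path_edges cs \<union> {{last cs, hd cs}}"
    using path_edges_append[of cs "[hd cs]"] by simp
  then show ?thesis
    unfolding ucycle_def using assms by blast
qed

lemma ucycle_Un_upath:
  assumes P: "upath P s t" and Q: "upath Q s t"
    and inner: "\<Union> P \<inter> \<Union> Q \<subseteq> {s, t}" and disj: "P \<inter> Q = {}"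
  shows "ucycle (P \<union> Q)"
proof -
  obtain vs where vs: "distinct vs" "2 \<le> length vs" "hd vs = s" "last vs = t"
    and P_eq: "P = path_edges vs"
    using P unfolding upath_def by blast
  obtain ws where ws: "distinct ws" "2 \<le> length ws" "hd ws = s" "last ws = t"
    and Q_eq: "Q = path_edges ws"
    using Q unfolding upath_def by blast
  have vs_ne: "vs \<noteq> []"
    using vs(2) by auto
  obtain mid where ws_eq: "ws = s # mid @ [t]"
    using ws(2-4) by (cases ws rule: rev_cases) (auto simp: Suc_le_length_iff)
  have "set mid \<inter> set vs = {}"
    using inner ws(1) ws_eq P_eq Q_eq Union_path_edges[OF vs(2)] Union_path_edges[OF ws(2)]
    by auto
  define cs where "cs = vs @ rev mid"
  have cs_distinct: "distinct cs"
    unfolding cs_def using vs(1) ws(1) ws_eq \<open>set mid \<inter> set vs = {}\<close> by auto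
  have cs_length: "3 \<le> length cs"
  proof (cases mid)
    case Nil
    then have "vs \<noteq> [s, t]" using disj P_eq Q_eq ws_eq by auto
    then show ?thesis
      unfolding cs_def using vs(2-4) Nil by (cases vs; cases "tl vs"; cases "tl (tl vs)") auto
  next
    case Cons
    then show ?thesis unfolding cs_def using vs(2) by simp
  qed
  have "hd cs = s"
    unfolding cs_def using vs_ne vs(3) by (simp add: hd_append)
  then have "path_edges (cs @ [hd cs]) = path_edges (vs @ rev (s # mid))"
    unfolding cs_def by simp
  also have "\<dots> = path_edges vs \<union> path_edges ([t] @ rev (s # mid))"
    using vs_ne vs(4) path_edges_append[of vs "rev (s # mid)"]
      path_edges_append[of "[t]" "rev (s # mid)"] by simp
  also have "[t] @ rev (s # mid) = rev ws"
    using ws_eq by simp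
  finally show ?thesis
    using ucycle_path_edges_closed[OF cs_distinct cs_length] P_eq Q_eq by simp
qed

lemma Vs_eq_Union_Es: "Vs G = \<Union> (Es G)"
  by (simp add: Vs_def Es_def)

lemma Es_Un: "Es (G \<union> H) = Es G \<union> Es H"
  by (simp add: Es_def image_Un)

lemma card_Es: "colored_graph G \<Longrightarrow> card (Es G) = card G"
  unfolding colored_graph_def Es_def by (metis card_image inj_onI)

lemma colored_graph_subset: "colored_graph G \<Longrightarrow> H \<subseteq> G \<Longrightarrow> colored_graph H"
  unfolding colored_graph_def by (meson finite_subset subsetD)

lemma colored_graph_Un:
  "colored_graph G \<Longrightarrow> colored_graph H \<Longrightarrow> Es G \<inter> Es H = {} \<Longrightarrow> colored_graph (G \<union> H)"
  unfolding colored_graph_def Es_def by (auto; blast)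

lemma ccycle_Un_cpath:
  assumes "cpath P s t" and "cpath Q s t"
    and "Vs P \<inter> Vs Q \<subseteq> {s, t}" and "Es P \<inter> Es Q = {}"
  shows "ccycle (P \<union> Q)"
  using assms colored_graph_Un ucycle_Un_upath
  unfolding ccycle_def cpath_def Vs_eq_Union_Es Es_Un by blast

lemma card_Un_Es_disjoint:
  "finite G \<Longrightarrow> finite H \<Longrightarrow> Es G \<inter> Es H = {} \<Longrightarrow> card (G \<union> H) = card G + card H"
  unfolding Es_def by (rule card_Un_disjoint) auto

text \<open>Of the three cycles formed by two of the paths, one is even by parity.\<close>
lemma theta_paths_even_cycle:
  assumes "theta_paths P1 P2 P3 s t"
  obtains K where "K \<subseteq> P1 \<union> P2 \<union> P3" "ccycle K" "even (card K)"
proof -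
  have cycles: "ccycle (P1 \<union> P2)" "ccycle (P1 \<union> P3)" "ccycle (P2 \<union> P3)"
    using assms ccycle_Un_cpath unfolding theta_paths_def by blast+
  have "finite P1" "finite P2" "finite P3"
    using assms unfolding theta_paths_def cpath_def colored_graph_def by blast+
  then have cards: "card (P1 \<union> P2) = card P1 + card P2" "card (P1 \<union> P3) = card P1 + card P3"
    "card (P2 \<union> P3) = card P2 + card P3"
    using assms card_Un_Es_disjoint unfolding theta_paths_def by blast+
  consider "even (card P1 + card P2)" | "even (card P1 + card P3)" | "even (card P2 + card P3)"
    by auto
  then show thesis
  proof cases
    case 1
    then show thesis using that[of "P1 \<union> P2"] cycles cards by auto
  next
    case 2
    then show thesis using that[of "P1 \<union> P3"] cycles cards by auto
  next
    case 3
    then show thesis using that[of "P2 \<union> P3"] cycles cards by auto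
  qed
qed

lemma rainbow_iff_inj_on: "finite G \<Longrightarrow> rainbow G \<longleftrightarrow> inj_on snd G"
  unfolding rainbow_def cols_def by (simp add: inj_on_iff_eq_card)

lemma rainbow_subset: "finite G \<Longrightarrow> rainbow G \<Longrightarrow> H \<subseteq> G \<Longrightarrow> rainbow H"
  by (meson finite_subset inj_on_subset rainbow_iff_inj_on)

lemma rainbow_insert:
  "finite G \<Longrightarrow> rainbow G \<Longrightarrow> snd x \<notin> cols G \<Longrightarrow> rainbow (insert x G)"
  unfolding cols_def by (auto simp: rainbow_iff_inj_on)

lemma not_rainbowE:
  assumes "finite G" and "\<not> rainbow G"
  obtains g g' where "g \<in> G" "g' \<in> G" "g \<noteq> g'" "snd g = snd g'"
  using assms by (auto simp: rainbow_iff_inj_on inj_on_def)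

lemma almost_rainbow_Diff_repeated_color:
  assumes "finite G" and "almost_rainbow G"
    and "g \<in> G" "g' \<in> G" "g \<noteq> g'" "snd g = snd g'"
  shows "rainbow (G - {g})"
proof -
  have "cols (G - {g}) = cols G"
    using assms(4-6) unfolding cols_def by (auto intro: rev_image_eqI)
  moreover have "card (G - {g}) = card G - 1"
    using assms(1,3) by simp
  ultimately show ?thesis
    using assms(2) unfolding rainbow_def almost_rainbow_def by simp
qed

lemma bad_piece_even_cycle_rainbow_Diff:
  assumes "bad_piece B" and "g \<in> B" "g' \<in> B" "g \<noteq> g'" "snd g = snd g'"
  obtains K where "K \<subseteq> B" "ccycle K" "even (card K)" "rainbow (K - {g})"
proof -
  have "finite B"
    using assms(1) by (simp add: bad_piece_def theta_graph_def colored_graph_def)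
  then have "rainbow (B - {g})"
    using assms almost_rainbow_Diff_repeated_color by (auto simp: bad_piece_def)
  moreover obtain K where "K \<subseteq> B" "ccycle K" "even (card K)"
    using assms(1) theta_paths_even_cycle unfolding bad_piece_def by metis
  ultimately show thesis
    using that rainbow_subset \<open>finite B\<close> by (meson Diff_mono finite_Diff order_refl)
qed

lemma is_partition_same_color:
  assumes "is_partition G ps" and "g \<in> G" "g' \<in> G" "snd g = snd g'"
  obtains p where "p \<in> set ps" "g \<in> p" "g' \<in> p"
proof -
  obtain i j where ij: "i < length ps" "g \<in> ps ! i" "j < length ps" "g' \<in> ps ! j"
    using assms(1-3) unfolding is_partition_def by (metis UnionE in_set_conv_nth)
  then have "snd g \<in> cols (ps ! i) \<inter> cols (ps ! j)"
    using assms(4) unfolding cols_def by (metis IntI image_eqI)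
  then have "i = j"
    using assms(1) ij unfolding is_partition_def by blast
  then show thesis
    using that ij nth_mem by metis
qed

lemma frankenstein_repeated_color_bad_piece:
  assumes "frankenstein F Cs Bs Ts" and "g \<in> F" "g' \<in> F" "g \<noteq> g'" "snd g = snd g'"
  obtains B where "B \<in> set Bs" "g \<in> B" "g' \<in> B"
proof -
  have part: "is_partition F (Cs @ Bs @ Ts)"
    using assms(1) by (simp add: frankenstein_def)
  obtain p where p: "p \<in> set (Cs @ Bs @ Ts)" "g \<in> p" "g' \<in> p"
    using is_partition_same_color[OF part assms(2,3,5)] .
  have "finite p"
    using part p(1) by (simp add: is_partition_def colored_graph_def)
  then have "\<not> rainbow p"
    using p(2,3) assms(4,5) by (auto simp: rainbow_iff_inj_on inj_on_def)
  then have "p \<in> set Bs"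
    using assms(1) p(1) by (auto simp: frankenstein_def long_rainbow_odd_cycle_def)
  then show thesis
    using that p by blast
qed

lemma colored_graph_swap_edge:
  assumes "colored_graph G" and "g \<in> G" and "fst x = fst g"
  shows "colored_graph (insert x (G - {g}))"
  unfolding colored_graph_def
proof (intro conjI ballI impI)
  show "finite (insert x (G - {g}))"
    using assms(1) by (simp add: colored_graph_def)
next
  fix y
  assume "y \<in> insert x (G - {g})"
  then show "\<exists>u v. u \<noteq> v \<and> fst y = {u, v}"
    using assms unfolding colored_graph_def by (metis DiffD1 insertE)
next
  fix y z
  assume "y \<in> insert x (G - {g})" "z \<in> insert x (G - {g})" "fst y = fst z"
  then show "y = z"
    using assms unfolding colored_graph_def by (metis DiffE insertE singletonI)
qed

lemma ccycle_swap_edge: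
  assumes "ccycle K" and "g \<in> K" and "fst x = fst g" and "x \<notin> K"
  shows "ccycle (insert x (K - {g}))" and "card (insert x (K - {g})) = card K"
proof -
  have cg: "colored_graph K"
    using assms(1) by (simp add: ccycle_def)
  have "Es (insert x (K - {g})) = Es K"
    unfolding Es_def using assms(2,3) by auto
  then show "ccycle (insert x (K - {g}))"
    using assms(1) colored_graph_swap_edge[OF cg assms(2,3)] by (simp add: ccycle_def)
  show "card (insert x (K - {g})) = card K"
    using cg assms(2,4) unfolding colored_graph_def
    by (metis DiffD1 card_Suc_Diff1 card.insert finite_Diff)
qed

lemma ccycle_on_covered_pairs:
  assumes "colored_graph F" and "ccycle C" and "Es C \<subseteq> Es F"
  obtains H where "H \<subseteq> F" "ccycle H" "Es H = Es C" "card H = card C"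
proof -
  define H where "H = {g \<in> F. fst g \<in> Es C}"
  have H_iff: "g \<in> H \<longleftrightarrow> g \<in> F \<and> fst g \<in> Es C" for g
    unfolding H_def by simp
  have "H \<subseteq> F"
    using H_iff by blast
  then have cgH: "colored_graph H"
    by (rule colored_graph_subset[OF assms(1)])
  have EsH: "Es H = Es C"
  proof
    show "Es H \<subseteq> Es C"
      using H_iff by (auto simp: Es_def[of H])
    show "Es C \<subseteq> Es H"
    proof
      fix e
      assume "e \<in> Es C"
      then obtain g where "g \<in> F" "fst g = e"
        using assms(3) unfolding Es_def by (metis imageE subsetD)
      then show "e \<in> Es H"
        using \<open>e \<in> Es C\<close> H_iff unfolding Es_def[of H] by blast
    qed
  qed
  have cgC: "colored_graph C"
    using assms(2) by (simp add: ccycle_def)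
  have "ccycle H"
    using cgH EsH assms(2) by (simp add: ccycle_def)
  moreover have "card H = card C"
    using card_Es[OF cgH] card_Es[OF cgC] EsH by simp
  ultimately show thesis
    using that \<open>H \<subseteq> F\<close> EsH by blast
qed

lemma outer_edge_iff_not_in_Es:
  assumes "l \<in> Lambda m F" and "f \<in> D l" and "snd f = l"
  shows "outer_edge D m F f \<longleftrightarrow> fst f \<notin> Es F"
proof -
  have "snd g \<noteq> snd f" if "g \<in> F" for g
    using that assms(1,3) unfolding Lambda_def cols_def by (metis DiffD2 image_eqI)
  then show ?thesis
    using assms(1,2) unfolding outer_edge_def coincident_def Es_def by blast
qed

lemma frankenstein_misses_pair_of_new_colored_even_cycle:
  assumes fr: "frankenstein F Cs Bs Ts" and FU: "F \<subseteq> U" and DU: "D \<subseteq> U"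
    and free: "\<not> (\<exists>H\<subseteq>U. ccycle H \<and> rainbow H \<and> even (card H))"
    and D: "ccycle D" "even (card D)" and mono: "\<forall>x\<in>D. snd x = l" and new: "l \<notin> cols F"
  shows "\<exists>f\<in>D. fst f \<notin> Es F"
proof (rule ccontr)
  assume "\<not> (\<exists>f\<in>D. fst f \<notin> Es F)"
  then have "Es D \<subseteq> Es F"
    unfolding Es_def[of D] by blast
  moreover have "colored_graph F"
    using fr unfolding frankenstein_def by blast
  ultimately obtain H where H: "H \<subseteq> F" "ccycle H" "Es H = Es D" "card H = card D"
    using ccycle_on_covered_pairs D(1) by blast
  have "H \<subseteq> U" "even (card H)"
    using H(1,4) FU D(2) by auto
  then have "\<not> rainbow H"
    using free H(2) by blast
  moreover have "finite H"
    using H(2) unfolding ccycle_def colored_graph_def by blast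
  ultimately obtain g g' where g: "g \<in> H" "g' \<in> H" "g \<noteq> g'" "snd g = snd g'"
    using not_rainbowE by blast
  then obtain B where B: "B \<in> set Bs" "g \<in> B" "g' \<in> B"
    using frankenstein_repeated_color_bad_piece[OF fr] H(1) by blast
  then have "bad_piece B"
    using fr unfolding frankenstein_def by blast
  then obtain K where K: "K \<subseteq> B" "ccycle K" "even (card K)" "rainbow (K - {g})"
    using bad_piece_even_cycle_rainbow_Diff B(2,3) g(3,4) by blast
  have "B \<subseteq> F"
    using fr B(1) unfolding frankenstein_def is_partition_def by auto
  then have KF: "K \<subseteq> F"
    using K(1) by blast
  have "finite K"
    using K(2) unfolding ccycle_def colored_graph_def by blast
  show False
  proof (cases "g \<in> K")
    case False
    then have "rainbow K"
      using K(4) by simp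
    then show False
      using free K(2,3) KF FU by blast
  next
    case True
    have "fst g \<in> Es D"
      using g(1) H(3) unfolding Es_def[of H] by blast
    then obtain x where x: "x \<in> D" "fst x = fst g"
      unfolding Es_def by blast
    have "cols K \<subseteq> cols F"
      using KF unfolding cols_def by blast
    then have x_new: "snd x \<notin> cols K"
      using x(1) mono new by auto
    then have "x \<notin> K"
      unfolding cols_def by blast
    define K' where "K' = insert x (K - {g})"
    have "ccycle K'" "card K' = card K"
      unfolding K'_def using ccycle_swap_edge[OF K(2) True x(2) \<open>x \<notin> K\<close>] by auto
    moreover have "snd x \<notin> cols (K - {g})"
      using x_new unfolding cols_def by blast
    then have "rainbow K'"
      unfolding K'_def using rainbow_insert K(4) \<open>finite K\<close> by blast
    moreover have "K' \<subseteq> U"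
      unfolding K'_def using KF x(1) FU DU by blast
    ultimately show False
      using free K(3) by auto
  qed
qed

theorem proposition3p1:
  fixes n m :: nat and D :: "nat \<Rightarrow> cgraph"
    and F :: cgraph and Cs Bs Ts :: "cgraph list"
  assumes "standing_setup n m D"
    and "frank_optimal D m F Cs Bs Ts"
  shows "\<forall>l\<in>Lambda m F. \<exists>f\<in>D l. outer_edge D m F f"
proof
  fix l
  assume l: "l \<in> Lambda m F"
  then have "l \<in> {1..m}" and new: "l \<notin> cols F"
    unfolding Lambda_def by auto
  then have D: "ccycle (D l)" "even (card (D l))" "\<forall>x\<in>D l. snd x = l"
    and free: "\<not> (\<exists>H\<subseteq>union_fam D m. ccycle H \<and> rainbow H \<and> even (card H))"
    using assms(1) unfolding standing_setup_def by auto
  have "D l \<subseteq> union_fam D m"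
    using \<open>l \<in> {1..m}\<close> unfolding union_fam_def by blast
  moreover have "frankenstein F Cs Bs Ts" and "F \<subseteq> union_fam D m"
    using assms(2) unfolding frank_optimal_def frank_sub_def by auto
  ultimately obtain f where "f \<in> D l" "fst f \<notin> Es F"
    using frankenstein_misses_pair_of_new_colored_even_cycle D free new by blast
  then show "\<exists>f\<in>D l. outer_edge D m F f"
    using outer_edge_iff_not_in_Es l D(3) by blast
qed

end
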